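(* For any positive integers $m$ and $n$ there exist a reflexive lattice polytope $P$ and indices $i_1<j_1<i_2<j_2<\cdots<i_m<j_m<i_{m+1}$ such that \[ h^*_{i_\ell}-h^*_{j_\ell}\ge n\quad\text{and}\quad h^*_{i_{\ell+1}}-h^*_{j_\ell}\ge n\qquad\text{for }1\le\ell\le m, \] where $h^*(P)=(h^*_0,\ldots,h^*_{\dim P})$. Furthermore, $P$ can be chosen so that $\dim P=O(m\log\log n)$.
   Context: For a lattice $N'$ and a $d$-dimensional lattice polytope $P\subset N'_{\mathbb R}$, $\operatorname{Ehr}_P(t)=1+\sum_{m\ge1}\#(mP\cap N')\,t^m$ and $(1-t)^{d+1}\operatorname{Ehr}_P(t)=h^*_0+\cdots+h^*_dt^d$. $P$ is reflexive if $0$ is in its interior and $P^\circ=\{u\in M'_{\mathbb R}:\langle u,v\rangle\ge-1\ \forall v\in P\}$ has vertices in $M'=\operatorname{Hom}(N',\mathbb Z)$. The dimension bound means there is an absolute constant $C$ such that $P$ can be chosen with $\dim P\le C\,m\log\log n$ (for $n$ large enough that $\log\log n$ is defined and positive). *)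

theory Defs
  imports Complex_Main "HOL-Computational_Algebra.Formal_Power_Series"
begin

text \<open>Lattice N' = Z^d, realised concretely: points of R^d are functions nat => real
  vanishing outside {..<d}; lattice points are functions nat => int vanishing outside {..<d}.\<close>

definition rvec :: "nat \<Rightarrow> (nat \<Rightarrow> real) set" where
  "rvec d = {x. \<forall>i\<ge>d. x i = 0}"

definition zvec :: "nat \<Rightarrow> (nat \<Rightarrow> int) set" where
  "zvec d = {z. \<forall>i\<ge>d. z i = 0}"

definition of_zvec :: "(nat \<Rightarrow> int) \<Rightarrow> (nat \<Rightarrow> real)" where
  "of_zvec z = (\<lambda>i. real_of_int (z i))"

definition dinner :: "nat \<Rightarrow> (nat \<Rightarrow> real) \<Rightarrow> (nat \<Rightarrow> real) \<Rightarrow> real" where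
  "dinner d u x = (\<Sum>i<d. u i * x i)"

definition lconv :: "(nat \<Rightarrow> int) set \<Rightarrow> (nat \<Rightarrow> real) set" where
  "lconv V = {x. \<exists>c :: (nat \<Rightarrow> int) \<Rightarrow> real. (\<forall>v\<in>V. c v \<ge> 0) \<and> sum c V = 1 \<and>
                   x = (\<lambda>i. \<Sum>v\<in>V. c v * real_of_int (v i))}"

definition lattice_polytope :: "nat \<Rightarrow> (nat \<Rightarrow> int) set \<Rightarrow> bool" where
  "lattice_polytope d V \<longleftrightarrow> finite V \<and> V \<noteq> {} \<and> V \<subseteq> zvec d"

definition lattice_count :: "nat \<Rightarrow> (nat \<Rightarrow> int) set \<Rightarrow> nat \<Rightarrow> nat" where
  "lattice_count d V t = card {z \<in> zvec d. of_zvec z \<in> (\<lambda>x. (\<lambda>i. real t * x i)) ` lconv V}"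

definition ehrhart_series :: "nat \<Rightarrow> (nat \<Rightarrow> int) set \<Rightarrow> int fps" where
  "ehrhart_series d V = Abs_fps (\<lambda>t. if t = 0 then 1 else int (lattice_count d V t))"

definition hstar :: "nat \<Rightarrow> (nat \<Rightarrow> int) set \<Rightarrow> nat \<Rightarrow> int" where
  "hstar d V k = fps_nth ((1 - fps_X) ^ (d + 1) * ehrhart_series d V) k"

definition zero_interior :: "nat \<Rightarrow> (nat \<Rightarrow> real) set \<Rightarrow> bool" where
  "zero_interior d S \<longleftrightarrow> (\<exists>e>0. \<forall>x\<in>rvec d. (\<Sum>i<d. (x i)\<^sup>2) < e\<^sup>2 \<longrightarrow> x \<in> S)"

definition polar :: "nat \<Rightarrow> (nat \<Rightarrow> real) set \<Rightarrow> (nat \<Rightarrow> real) set" where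
  "polar d S = {u \<in> rvec d. \<forall>v\<in>S. dinner d u v \<ge> -1}"

definition is_vertex :: "(nat \<Rightarrow> real) set \<Rightarrow> (nat \<Rightarrow> real) \<Rightarrow> bool" where
  "is_vertex S u \<longleftrightarrow> u \<in> S \<and>
     (\<forall>a\<in>S. \<forall>b\<in>S. \<forall>t::real. 0 < t \<and> t < 1 \<and> u = (\<lambda>i. (1 - t) * a i + t * b i) \<longrightarrow> a = b)"

definition reflexive_polytope :: "nat \<Rightarrow> (nat \<Rightarrow> int) set \<Rightarrow> bool" where
  "reflexive_polytope d V \<longleftrightarrow> lattice_polytope d V \<and> zero_interior d (lconv V) \<and>
     (\<forall>u. is_vertex (polar d (lconv V)) u \<longrightarrow> (\<forall>i. u i \<in> \<int>))"

end

theory Submission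
  imports Defs "HOL-Analysis.Complex_Transcendental"
begin

text \<open>For weights \<open>w\<^sub>1, \<dots>, w\<^sub>d \<ge> 1\<close> that all divide \<open>W = 1 + \<Sum> w\<^sub>i\<close>, the simplex with
  vertices \<open>e\<^sub>1, \<dots>, e\<^sub>d\<close> and \<open>-w\<close> is reflexive, and its \<open>h\<^sup>*\<close>-polynomial is
  \<open>\<Sum>r<W. t\<^bsup>height r\<^esup>\<close> with \<open>height r = r - \<Sum> \<lfloor>r w\<^sub>i / W\<rfloor>\<close>: the lattice points of the
  fundamental parallelepiped of its cone, counted by height.

  Let \<open>M\<^sub>k = egypt k\<close>, so that \<open>1/3 = (\<Sum>s<k. 1/(M\<^sub>s + 1)) + 1/M\<^sub>k\<close> and \<open>M\<^sub>k \<ge> 3\<^bsup>2\<^sup>k\<^esup>\<close>.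
  For \<open>W = K M\<^sub>k\<close> and the weights \<open>W/(M\<^sub>s + 1)\<close> (twice for each \<open>s < k\<close>), \<open>W/3\<close> and
  \<open>2K - 1\<close> ones, the height of \<open>r = q M\<^sub>k + v\<close> is \<open>2q + h(v)\<close> with \<open>0 \<le> h(v) \<le> 2k + 2\<close>
  and \<open>h(v)\<close> of the parity of \<open>v mod 3\<close>. Hence \<open>h\<^sup>*\<^sub>j\<close> is \<open>2M\<^sub>k/3\<close> for even and \<open>M\<^sub>k/3\<close> for
  odd \<open>j\<close> with \<open>2k + 2 \<le> j < 2K\<close>. Taking \<open>k = O(log log n)\<close> with \<open>M\<^sub>k/3 \<ge> n\<close> and
  \<open>K = k + m + 2\<close> gives the theorem in dimension \<open>4k + 2m + 4\<close>.\<close>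

section \<open>Reflexive weighted simplices\<close>

definition unit_zvec :: "nat \<Rightarrow> nat \<Rightarrow> int" where
  "unit_zvec i = (\<lambda>j. if j = i then 1 else 0)"

lemma inj_unit_zvec: "inj unit_zvec"
proof (rule injI)
  fix a b assume "unit_zvec a = unit_zvec b"
  then have "unit_zvec a a = unit_zvec b a" by simp
  then show "a = b" unfolding unit_zvec_def by (auto split: if_splits)
qed

lemma sum_mult_unit_zvec:
  assumes "finite A"
  shows "(\<Sum>i\<in>A. f i * real_of_int (unit_zvec j i)) = (if j \<in> A then f j else 0)"
proof -
  have "f i * real_of_int (unit_zvec j i) = (if i = j then f j else 0)" for i
    by (simp add: unit_zvec_def)
  then show ?thesis using assms by simp
qed

lemma not_is_vertex_midpoint:
  assumes "(\<lambda>i. u i + e i) \<in> S" and "(\<lambda>i. u i - e i) \<in> S" and "e k \<noteq> 0"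
  shows "\<not> is_vertex S u"
proof
  assume "is_vertex S u"
  then have extreme: "\<And>a b t. a \<in> S \<Longrightarrow> b \<in> S \<Longrightarrow> 0 < t \<Longrightarrow> t < 1 \<Longrightarrow>
      u = (\<lambda>i. (1 - t) * a i + t * b i) \<Longrightarrow> a = b"
    unfolding is_vertex_def by blast
  have "u = (\<lambda>i. (1 - 1/2) * (u i - e i) + 1/2 * (u i + e i))"
    by (simp add: field_simps)
  then have "(\<lambda>i. u i - e i) = (\<lambda>i. u i + e i)"
    by (intro extreme[OF assms(2,1), of "1/2"]) auto
  then have "u k - e k = u k + e k" by (rule fun_cong)
  with assms(3) show False by simp
qed

lemma of_zvec_mem_lconv:
  assumes "finite V" and "v \<in> V"
  shows "of_zvec v \<in> lconv V"
proof -
  define c where "c = (\<lambda>u. if u = v then (1::real) else 0)"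
  have "(\<forall>u\<in>V. c u \<ge> 0) \<and> sum c V = 1 \<and> of_zvec v = (\<lambda>i. \<Sum>u\<in>V. c u * real_of_int (u i))"
    unfolding c_def of_zvec_def using assms
    by (simp add: if_distrib[of "\<lambda>x. x * _"] cong: if_cong)
  then show ?thesis unfolding lconv_def by blast
qed

lemma mem_polar_lconv_iff:
  assumes "finite V"
  shows "u \<in> polar d (lconv V) \<longleftrightarrow> u \<in> rvec d \<and> (\<forall>v\<in>V. -1 \<le> dinner d u (of_zvec v))"
proof -
  have "-1 \<le> dinner d u x"
    if x: "x \<in> lconv V" and V: "\<forall>v\<in>V. -1 \<le> dinner d u (of_zvec v)" for x
  proof -
    obtain c where c: "\<forall>v\<in>V. c v \<ge> 0" "sum c V = 1" "x = (\<lambda>i. \<Sum>v\<in>V. c v * real_of_int (v i))"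
      using x unfolding lconv_def by blast
    have "dinner d u x = (\<Sum>v\<in>V. c v * dinner d u (of_zvec v))"
      unfolding c(3) dinner_def of_zvec_def
      by (simp add: sum_distrib_left sum_distrib_right algebra_simps sum.swap[of _ "{..<d}"])
    also have "\<dots> \<ge> (\<Sum>v\<in>V. c v * (-1))"
      by (intro sum_mono mult_left_mono) (use c V in auto)
    finally show ?thesis using c(2) by (simp add: sum_negf)
  qed
  then show ?thesis
    unfolding polar_def using of_zvec_mem_lconv[OF assms] by blast
qed

locale weighted_simplex =
  fixes d :: nat and w :: "nat \<Rightarrow> int"
  assumes weight_pos: "\<And>i. i < d \<Longrightarrow> 1 \<le> w i"
    and weight_zero: "\<And>i. d \<le> i \<Longrightarrow> w i = 0"
    and weight_dvd: "\<And>i. i < d \<Longrightarrow> w i dvd 1 + (\<Sum>j<d. w j)"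
begin

definition W :: int where "W = 1 + (\<Sum>j<d. w j)"

definition apex :: "nat \<Rightarrow> int" where "apex = (\<lambda>j. - w j)"

definition vertices :: "(nat \<Rightarrow> int) set" where
  "vertices = insert apex (unit_zvec ` {..<d})"

lemma sum_weights: "(\<Sum>i<d. w i) = W - 1"
  unfolding W_def by simp

lemma W_ge_1: "1 \<le> W"
proof -
  have "0 \<le> (\<Sum>i<d. w i)" by (rule sum_nonneg) (use weight_pos in force)
  then show ?thesis unfolding W_def by simp
qed

lemma apex_notin_unit_zvec: "apex \<notin> unit_zvec ` {..<d}"
proof
  assume "apex \<in> unit_zvec ` {..<d}"
  then obtain i where i: "i < d" "apex = unit_zvec i" by auto
  then have "apex i = unit_zvec i i" by simp
  then show False using weight_pos[OF i(1)] unfolding apex_def unit_zvec_def by simp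
qed

lemma sum_vertices: "sum f vertices = f apex + (\<Sum>i<d. f (unit_zvec i))"
proof -
  have "sum f vertices = f apex + sum f (unit_zvec ` {..<d})"
    unfolding vertices_def using apex_notin_unit_zvec by simp
  also have "sum f (unit_zvec ` {..<d}) = (\<Sum>i<d. f (unit_zvec i))"
    using inj_unit_zvec by (simp add: sum.reindex inj_on_def inj_def)
  finally show ?thesis .
qed

lemma lattice_polytope_vertices: "lattice_polytope d vertices"
  unfolding lattice_polytope_def vertices_def zvec_def apex_def unit_zvec_def
  using weight_zero by auto

lemma sum_vertices_coord:
  "(\<Sum>v\<in>vertices. c v * real_of_int (v j)) = - c apex * w j + (if j < d then c (unit_zvec j) else 0)"
  by (simp add: sum_vertices apex_def unit_zvec_def if_distrib[of real_of_int]
      if_distrib[of "\<lambda>x. c _ * x"] cong: if_cong)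

text \<open>The inequalities below are the barycentric coordinates of \<open>x\<close> times \<open>W\<close>:
  \<open>1 - \<Sum>x\<close> for the apex and \<open>W x\<^sub>i + w\<^sub>i (1 - \<Sum>x)\<close> for \<open>e\<^sub>i\<close>.\<close>

lemma lconv_verticesD:
  assumes "x \<in> lconv vertices"
  shows "(\<forall>i\<ge>d. x i = 0) \<and> (\<Sum>i<d. x i) \<le> 1 \<and>
    (\<forall>i<d. 0 \<le> real_of_int W * x i + real_of_int (w i) * (1 - (\<Sum>i<d. x i)))"
proof -
  obtain c where c: "\<forall>v\<in>vertices. c v \<ge> 0" "sum c vertices = 1"
    "x = (\<lambda>i. \<Sum>v\<in>vertices. c v * real_of_int (v i))"
    using assms unfolding lconv_def by blast
  have x: "x j = - c apex * w j + (if j < d then c (unit_zvec j) else 0)" for j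
    using c(3) sum_vertices_coord by simp
  have c_apex: "c apex \<ge> 0" and c_unit: "\<And>i. i < d \<Longrightarrow> c (unit_zvec i) \<ge> 0"
    using c(1) unfolding vertices_def by auto
  have "(\<Sum>i<d. x i) = - c apex * (\<Sum>i<d. real_of_int (w i)) + (\<Sum>i<d. c (unit_zvec i))"
    by (simp add: x sum.distrib sum_distrib_left sum_negf sum_subtractf)
  also have "\<dots> = 1 - c apex * W"
    using c(2) sum_vertices[of c] unfolding W_def by (simp add: algebra_simps)
  finally have s: "(\<Sum>i<d. x i) = 1 - c apex * W" .
  have "real_of_int W * x i + real_of_int (w i) * (1 - (\<Sum>i<d. x i)) = W * c (unit_zvec i)"
    if "i < d" for i
  proof -
    have xi: "x i = - c apex * w i + c (unit_zvec i)" using x[of i] that by simp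
    show ?thesis unfolding s xi by (simp add: algebra_simps)
  qed
  then show ?thesis
    using s x c_apex c_unit W_ge_1 weight_zero by simp
qed

lemma lconv_verticesI:
  assumes "\<forall>i\<ge>d. x i = 0" and "(\<Sum>i<d. x i) \<le> 1"
    and "\<forall>i<d. 0 \<le> real_of_int W * x i + real_of_int (w i) * (1 - (\<Sum>i<d. x i))"
  shows "x \<in> lconv vertices"
proof -
  define s where "s = (\<Sum>i<d. x i)"
  define c where "c v = (if v = apex then (1 - s) / W
      else (W * (\<Sum>i<d. x i * v i) + (\<Sum>i<d. w i * v i) * (1 - s)) / W)" for v
  have W_pos: "real_of_int W > 0" using W_ge_1 by simp
  have c_apex: "c apex = (1 - s) / W" unfolding c_def by simp
  have c_unit: "c (unit_zvec j) = (W * x j + w j * (1 - s)) / W" if "j < d" for j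
  proof -
    have "unit_zvec j \<noteq> apex" using apex_notin_unit_zvec that by (metis imageI lessThan_iff)
    moreover have "(\<Sum>i<d. x i * real_of_int (unit_zvec j i)) = x j"
      using that by (simp add: sum_mult_unit_zvec)
    moreover have "(\<Sum>i<d. real_of_int (w i) * real_of_int (unit_zvec j i)) = w j"
      using that sum_mult_unit_zvec[of "{..<d}" "\<lambda>i. real_of_int (w i)" j] by simp
    ultimately show ?thesis unfolding c_def by simp
  qed
  have "\<forall>v\<in>vertices. c v \<ge> 0"
    using assms W_pos c_apex c_unit unfolding vertices_def s_def by auto
  moreover have "sum c vertices = 1"
  proof -
    have "sum c vertices = (1 - s) / W + (\<Sum>j<d. (W * x j + w j * (1 - s)) / W)"
      using sum_vertices[of c] c_apex c_unit by simp
    also have "(\<Sum>j<d. (W * x j + w j * (1 - s)) / W) = (W * s + (W - 1) * (1 - s)) / W"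
      unfolding s_def W_def
      by (simp add: sum_divide_distrib[symmetric] sum.distrib sum_distrib_left sum_distrib_right)
    finally show ?thesis using W_pos by (simp add: field_simps)
  qed
  moreover have "x = (\<lambda>i. \<Sum>v\<in>vertices. c v * real_of_int (v i))"
  proof
    fix j
    show "x j = (\<Sum>v\<in>vertices. c v * real_of_int (v j))"
      unfolding sum_vertices_coord c_apex using W_pos assms(1) weight_zero
      by (cases "j < d") (auto simp: c_unit field_simps)
  qed
  ultimately show ?thesis unfolding lconv_def by blast
qed

lemma lconv_vertices_iff:
  "x \<in> lconv vertices \<longleftrightarrow> (\<forall>i\<ge>d. x i = 0) \<and> (\<Sum>i<d. x i) \<le> 1 \<and>
     (\<forall>i<d. 0 \<le> real_of_int W * x i + real_of_int (w i) * (1 - (\<Sum>i<d. x i)))"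
  using lconv_verticesD lconv_verticesI by blast

lemma finite_vertices: "finite vertices"
  unfolding vertices_def by simp

lemma mem_polar_iff:
  fixes u :: "nat \<Rightarrow> real"
  shows "u \<in> polar d (lconv vertices) \<longleftrightarrow>
     u \<in> rvec d \<and> (\<forall>i<d. -1 \<le> u i) \<and> (\<Sum>i<d. w i * u i) \<le> 1"
proof -
  have "dinner d u (of_zvec (unit_zvec i)) = u i" if "i < d" for i
    unfolding dinner_def of_zvec_def using sum_mult_unit_zvec[of "{..<d}" u i] that by simp
  moreover have "dinner d u (of_zvec apex) = - (\<Sum>i<d. w i * u i)"
    unfolding dinner_def of_zvec_def apex_def by (simp add: sum_negf algebra_simps)
  ultimately show ?thesis
    unfolding mem_polar_lconv_iff[OF finite_vertices] by (auto simp: vertices_def)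
qed

lemma zero_interior_lconv_vertices: "zero_interior d (lconv vertices)"
proof -
  define e :: real where "e = 1 / (W * (d + 1))"
  have W1: "real_of_int W \<ge> 1" using W_ge_1 by simp
  have e_pos: "e > 0" unfolding e_def using W1 by simp
  have e_small: "e * (W + d) \<le> 1"
  proof -
    have "real d * 1 \<le> real d * W" by (rule mult_left_mono) (use W1 in auto)
    then show ?thesis unfolding e_def using W1 by (simp add: field_simps)
  qed
  have "x \<in> lconv vertices" if x: "x \<in> rvec d" "(\<Sum>i<d. (x i)\<^sup>2) < e\<^sup>2" for x
  proof -
    have x_small: "\<bar>x i\<bar> < e" if "i < d" for i
    proof -
      have "(x i)\<^sup>2 \<le> (\<Sum>i<d. (x i)\<^sup>2)" using that by (intro member_le_sum) auto
      then have "\<bar>x i\<bar>\<^sup>2 < e\<^sup>2" using x(2) by simp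
      then show ?thesis using e_pos power2_less_imp_less[of "\<bar>x i\<bar>" e] by simp
    qed
    define s where "s = (\<Sum>i<d. x i)"
    have "\<bar>s\<bar> \<le> (\<Sum>i<d. \<bar>x i\<bar>)" unfolding s_def by (rule sum_abs)
    also have "\<dots> \<le> (\<Sum>i<d. e)" by (intro sum_mono) (use x_small in force)
    finally have s_small: "\<bar>s\<bar> \<le> d * e" by simp
    have "0 \<le> e * W" using e_pos W1 by simp
    then have de: "d * e \<le> 1" using e_small by (simp add: algebra_simps)
    have "0 \<le> real_of_int W * x i + real_of_int (w i) * (1 - s)" if i: "i < d" for i
    proof -
      have "real_of_int (w i) * (1 - s) \<ge> 1 * (1 - s)"
        by (rule mult_right_mono) (use weight_pos[OF i] s_small de in auto)
      moreover have "real_of_int W * (- e) \<le> real_of_int W * x i"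
        by (rule mult_left_mono) (use x_small[OF i] W1 in auto)
      ultimately show ?thesis using s_small e_small by (simp add: algebra_simps)
    qed
    moreover have "\<forall>i\<ge>d. x i = 0" using x(1) unfolding rvec_def by auto
    moreover have "s \<le> 1" using s_small de by simp
    ultimately show ?thesis unfolding lconv_vertices_iff s_def by auto
  qed
  then show ?thesis unfolding zero_interior_def using e_pos by blast
qed

lemma not_is_vertex_polar_perturb:
  fixes u e :: "nat \<Rightarrow> real"
  assumes u: "u \<in> polar d (lconv vertices)" and e: "\<forall>k\<ge>d. e k = 0" "e i \<noteq> 0"
    and coords: "\<forall>k<d. -1 \<le> u k - \<bar>e k\<bar>"
    and slack: "(\<Sum>k<d. w k * u k) + \<bar>\<Sum>k<d. w k * e k\<bar> \<le> 1"
  shows "\<not> is_vertex (polar d (lconv vertices)) u"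
proof -
  have "(\<lambda>k. u k + s * e k) \<in> polar d (lconv vertices)" if s: "s = 1 \<or> s = -1" for s :: real
  proof -
    have "(\<lambda>k. u k + s * e k) \<in> rvec d" using u e(1) unfolding mem_polar_iff rvec_def by auto
    moreover have "-1 \<le> u k + s * e k" if "k < d" for k
      using coords that s by (cases "s = 1") (auto simp: abs_if split: if_splits)
    moreover have "(\<Sum>k<d. w k * (u k + s * e k)) = (\<Sum>k<d. w k * u k) + s * (\<Sum>k<d. w k * e k)"
      by (simp add: algebra_simps sum.distrib sum_distrib_left)
    moreover have "s * (\<Sum>k<d. w k * e k) \<le> \<bar>\<Sum>k<d. w k * e k\<bar>"
      using s by (cases "s = 1") auto
    ultimately show ?thesis using slack unfolding mem_polar_iff by auto
  qed
  from this[of 1] this[of "-1"] show ?thesis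
    by (intro not_is_vertex_midpoint[where e = e and k = i]) (simp_all add: e(2))
qed

text \<open>At a vertex of the polar at most one of the inequalities \<open>u\<^sub>i \<ge> -1\<close> is slack, and if one
  is, then \<open>\<Sum> w\<^sub>i u\<^sub>i \<le> 1\<close> is tight: otherwise \<open>u\<close> can be moved in both directions along
  an edge.\<close>

lemma polar_vertex_slack_unique:
  fixes u :: "nat \<Rightarrow> real"
  assumes V: "is_vertex (polar d (lconv vertices)) u"
    and ij: "i < d" "j < d" and slack: "-1 < u i" "-1 < u j"
  shows "i = j"
proof (rule ccontr)
  assume "i \<noteq> j"
  have u: "u \<in> polar d (lconv vertices)" using V unfolding is_vertex_def by auto
  have wi: "real_of_int (w i) \<ge> 1" and wj: "real_of_int (w j) \<ge> 1" using weight_pos ij by auto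
  define t where "t = min (u i + 1) (u j + 1) / (w i + w j)"
  have t_pos: "t > 0" unfolding t_def using slack wi wj by simp
  have t_i: "t * (w i + w j) \<le> u i + 1" and t_j: "t * (w i + w j) \<le> u j + 1"
    unfolding t_def using wi wj by simp_all
  have "0 < t * w i" "0 < t * w j" using t_pos wi wj by simp_all
  define e where "e = (\<lambda>k. if k = i then t * w j else if k = j then - (t * w i) else 0)"
  have "(\<Sum>k<d. w k * e k) =
      (\<Sum>k<d. (if k = i then w i * (t * w j) else 0) + (if k = j then - (w j * (t * w i)) else 0))"
    by (intro sum.cong) (use \<open>i \<noteq> j\<close> in \<open>auto simp: e_def\<close>)
  also have "\<dots> = 0" using ij \<open>i \<noteq> j\<close> by (simp add: sum.distrib)
  finally have "(\<Sum>k<d. w k * e k) = 0" .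
  moreover have "-1 \<le> u k - \<bar>e k\<bar>" if "k < d" for k
    using u that t_i t_j \<open>0 < t * w i\<close> \<open>0 < t * w j\<close> \<open>i \<noteq> j\<close> unfolding mem_polar_iff e_def
    by (auto simp: algebra_simps)
  ultimately have "\<not> is_vertex (polar d (lconv vertices)) u"
    using u u[unfolded mem_polar_iff] t_pos wj ij weight_zero
    by (intro not_is_vertex_polar_perturb[where e = e and i = i]) (auto simp: e_def)
  then show False using V by simp
qed

lemma polar_vertex_slack_imp_tight:
  fixes u :: "nat \<Rightarrow> real"
  assumes V: "is_vertex (polar d (lconv vertices)) u" and i: "i < d" "-1 < u i"
  shows "(\<Sum>k<d. w k * u k) = 1"
proof (rule ccontr)
  assume "(\<Sum>k<d. w k * u k) \<noteq> 1"
  moreover have u: "u \<in> polar d (lconv vertices)" using V unfolding is_vertex_def by auto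
  ultimately have lt: "(\<Sum>k<d. w k * u k) < 1" unfolding mem_polar_iff by simp
  have wi: "real_of_int (w i) \<ge> 1" using weight_pos i by auto
  define t where "t = min (u i + 1) ((1 - (\<Sum>k<d. w k * u k)) / w i)"
  have t_pos: "t > 0" unfolding t_def using i lt wi by simp
  have "t \<le> (1 - (\<Sum>k<d. w k * u k)) / w i" unfolding t_def by simp
  then have t_w: "w i * t \<le> 1 - (\<Sum>k<d. w k * u k)"
    using wi by (simp add: field_simps)
  define e where "e = (\<lambda>k. if k = i then t else 0)"
  have "(\<Sum>k<d. w k * e k) = w i * t"
    unfolding e_def using i by (simp add: if_distrib[of "\<lambda>x. _ * x"] cong: if_cong)
  then have "(\<Sum>k<d. w k * u k) + \<bar>\<Sum>k<d. w k * e k\<bar> \<le> 1"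
    using t_w t_pos wi by simp
  moreover have "-1 \<le> u k - \<bar>e k\<bar>" if "k < d" for k
    using u that t_pos unfolding mem_polar_iff e_def t_def by auto
  ultimately have "\<not> is_vertex (polar d (lconv vertices)) u"
    using u t_pos i weight_zero
    by (intro not_is_vertex_polar_perturb[where e = e and i = i]) (auto simp: e_def)
  then show False using V by simp
qed

lemma polar_vertex_integral:
  fixes u :: "nat \<Rightarrow> real"
  assumes V: "is_vertex (polar d (lconv vertices)) u"
  shows "u k \<in> \<int>"
proof -
  have u: "u \<in> rvec d" "\<And>i. i < d \<Longrightarrow> -1 \<le> u i"
    using V unfolding is_vertex_def mem_polar_iff by auto
  consider "d \<le> k" | "u k = -1" | "k < d" "-1 < u k"
    by (metis u(2) le_less not_le)
  then show ?thesis
  proof cases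
    case 1
    then show ?thesis using u(1) unfolding rvec_def by auto
  next
    case 2
    then show ?thesis by simp
  next
    case 3
    have others: "u j = -1" if "j < d" "j \<noteq> k" for j
      using polar_vertex_slack_unique[OF V 3(1) that(1)] u(2)[of j] that 3 by force
    have "1 = w k * u k + (\<Sum>i\<in>{..<d}-{k}. w i * u i)"
      using polar_vertex_slack_imp_tight[OF V 3] 3(1) by (simp add: sum.remove)
    also have "(\<Sum>i\<in>{..<d}-{k}. w i * u i) = - (\<Sum>i\<in>{..<d}-{k}. real_of_int (w i))"
      using others by (simp add: sum_negf)
    also have "(\<Sum>i\<in>{..<d}-{k}. real_of_int (w i)) = real_of_int (W - 1 - w k)"
      using 3(1) sum_weights by (simp add: sum.remove of_int_sum[symmetric] del: of_int_sum)
    finally have "w k * (u k + 1) = real_of_int W" by (simp add: algebra_simps)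
    moreover obtain q where "W = w k * q" using weight_dvd[OF 3(1)] unfolding W_def by blast
    moreover have "real_of_int (w k) \<noteq> 0" using weight_pos[OF 3(1)] by simp
    ultimately have "real_of_int (w k) * (u k + 1) = real_of_int (w k) * q"
      by (simp add: algebra_simps)
    then have "u k = q - 1" using \<open>real_of_int (w k) \<noteq> 0\<close> by simp
    then show ?thesis by simp
  qed
qed

lemma reflexive_polytope_vertices: "reflexive_polytope d vertices"
  unfolding reflexive_polytope_def
  using lattice_polytope_vertices zero_interior_lconv_vertices polar_vertex_integral by blast

end

section \<open>The \<open>h\<^sup>*\<close>-vector of a weighted simplex\<close>

definition weak_compositions :: "nat \<Rightarrow> nat \<Rightarrow> (nat \<Rightarrow> nat) set" where
  "weak_compositions n s = {y. (\<forall>i\<ge>n. y i = 0) \<and> (\<Sum>i<n. y i) = s}"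

lemma finite_weak_compositions: "finite (weak_compositions n s)"
proof -
  have "y i \<le> s" if "y \<in> weak_compositions n s" "i < n" for y i
    using that member_le_sum[of i "{..<n}" y] unfolding weak_compositions_def by auto
  then have "weak_compositions n s \<subseteq>
      {f. \<forall>x. (x \<in> {..<n} \<longrightarrow> f x \<in> {..s}) \<and> (x \<notin> {..<n} \<longrightarrow> f x = 0)}"
    unfolding weak_compositions_def by auto
  then show ?thesis by (rule finite_subset) (intro finite_set_of_finite_funs; simp)
qed

lemma card_weak_compositions_Suc:
  "card (weak_compositions (Suc n) s) = (\<Sum>j\<le>s. card (weak_compositions n (s - j)))"
proof -
  have "bij_betw (\<lambda>y. (y n, y(n := 0))) (weak_compositions (Suc n) s)
      (SIGMA j:{..s}. weak_compositions n (s - j))"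
  proof (rule bij_betw_byWitness[where f' = "\<lambda>(j, y). y(n := j)"])
    have "(\<Sum>i<n. (y(n := j)) i) = (\<Sum>i<n. y i)" for y :: "nat \<Rightarrow> nat" and j
      by (intro sum.cong) auto
    then show "(\<lambda>y. (y n, y(n := 0))) ` weak_compositions (Suc n) s
        \<subseteq> (SIGMA j:{..s}. weak_compositions n (s - j))"
      and "(\<lambda>(j, y). y(n := j)) ` (SIGMA j:{..s}. weak_compositions n (s - j))
        \<subseteq> weak_compositions (Suc n) s"
      unfolding weak_compositions_def by auto
  qed (auto simp: weak_compositions_def)
  then have "card (weak_compositions (Suc n) s) = card (SIGMA j:{..s}. weak_compositions n (s - j))"
    by (rule bij_betw_same_card)
  also have "\<dots> = (\<Sum>j\<le>s. card (weak_compositions n (s - j)))"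
    by (rule card_SigmaI) (auto simp: finite_weak_compositions)
  finally show ?thesis .
qed

definition weak_compositions_fps :: "nat \<Rightarrow> int fps" where
  "weak_compositions_fps n = Abs_fps (\<lambda>s. int (card (weak_compositions n s)))"

lemma weak_compositions_fps_Suc:
  "weak_compositions_fps (Suc n) = weak_compositions_fps n * Abs_fps (\<lambda>_. 1)"
proof (rule fps_ext)
  fix s
  have "fps_nth (weak_compositions_fps (Suc n)) s = (\<Sum>j\<le>s. int (card (weak_compositions n (s - j))))"
    unfolding weak_compositions_fps_def by (simp add: card_weak_compositions_Suc)
  also have "\<dots> = (\<Sum>i\<le>s. int (card (weak_compositions n i)))"
    by (rule sum.reindex_bij_witness[where i = "\<lambda>i. s - i" and j = "\<lambda>i. s - i"]) auto
  also have "\<dots> = fps_nth (weak_compositions_fps n * Abs_fps (\<lambda>_. 1)) s"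
    unfolding weak_compositions_fps_def fps_mult_nth by (simp add: atLeast0AtMost)
  finally show "fps_nth (weak_compositions_fps (Suc n)) s =
      fps_nth (weak_compositions_fps n * Abs_fps (\<lambda>_. 1)) s" .
qed

lemma one_minus_X_power_mult_weak_compositions_fps: "(1 - fps_X) ^ n * weak_compositions_fps n = 1"
proof (induction n)
  case 0
  have "weak_compositions 0 s = (if s = 0 then {\<lambda>_. 0} else {})" for s
    unfolding weak_compositions_def by auto
  then show ?case by (intro fps_ext) (simp add: weak_compositions_fps_def)
next
  case (Suc n)
  have geometric: "(1 - fps_X) * Abs_fps (\<lambda>_. 1 :: int) = 1"
    by (rule fps_ext) (simp add: algebra_simps)
  have "(1 - fps_X) ^ Suc n * weak_compositions_fps (Suc n) =
      ((1 - fps_X) ^ n * weak_compositions_fps n) * ((1 - fps_X) * Abs_fps (\<lambda>_. 1))"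
    unfolding weak_compositions_fps_Suc by (simp add: algebra_simps)
  then show ?case using Suc geometric by simp
qed

lemma nonneg_mult_add_iff_div:
  fixes W z a :: int
  assumes "0 < W"
  shows "0 \<le> W * z + a \<longleftrightarrow> 0 \<le> z + a div W"
proof -
  have "(W * z + a) div W = z + a div W"
    using assms by (simp add: add.commute mult.commute)
  then show ?thesis
    using pos_imp_zdiv_nonneg_iff[OF assms, of "W * z + a"] by simp
qed

context weighted_simplex
begin

text \<open>The \<open>r\<close>-th lattice point (\<open>r < W\<close>) of the half-open fundamental parallelepiped of the
  cone over the simplex has barycentric coordinates \<open>r w\<^sub>i / W\<close> modulo 1 and \<open>r / W\<close> for the
  apex; its height is \<open>height r\<close>.\<close>

definition floor_sum :: "int \<Rightarrow> int" where
  "floor_sum r = (\<Sum>i<d. (r * w i) div W)"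

definition height :: "int \<Rightarrow> int" where
  "height r = r - floor_sum r"

definition dilate_points :: "nat \<Rightarrow> (nat \<Rightarrow> int) set" where
  "dilate_points t = {z \<in> zvec d. (\<Sum>i<d. z i) \<le> int t \<and>
     (\<forall>i<d. 0 \<le> W * z i + w i * (int t - (\<Sum>i<d. z i)))}"

lemma floor_sum_mult_add: "floor_sum (q * W + r) = q * (W - 1) + floor_sum r"
proof -
  have "((q * W + r) * w i) div W = q * w i + (r * w i) div W" for i
  proof -
    have "(q * W + r) * w i = r * w i + (q * w i) * W" by (simp add: algebra_simps)
    then show ?thesis using W_ge_1 by simp
  qed
  then have "floor_sum (q * W + r) = q * (\<Sum>i<d. w i) + floor_sum r"
    unfolding floor_sum_def by (simp add: sum.distrib sum_distrib_left)
  then show ?thesis using sum_weights by simp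
qed

lemma height_nonneg:
  assumes "0 \<le> r"
  shows "0 \<le> height r"
proof -
  have "W * floor_sum r = (\<Sum>i<d. W * ((r * w i) div W))"
    unfolding floor_sum_def by (simp add: sum_distrib_left)
  also have "\<dots> \<le> (\<Sum>i<d. r * w i)"
    by (intro sum_mono) (metis W_ge_1 mult_div_mod_eq le_add_same_cancel1 pos_mod_sign zero_less_one
        order_less_le_trans)
  also have "\<dots> = r * (W - 1)" by (simp add: sum_weights flip: sum_distrib_left)
  also have "\<dots> \<le> W * r" using assms by (simp add: algebra_simps)
  finally show ?thesis using W_ge_1 unfolding height_def by simp
qed

lemma dilate_points_0: "dilate_points 0 = {\<lambda>_. 0}"
proof
  show "dilate_points 0 \<subseteq> {\<lambda>_. 0}"
  proof
    fix z assume z: "z \<in> dilate_points 0"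
    define s where "s = (\<Sum>i<d. z i)"
    have z': "s \<le> 0" "\<And>i. i < d \<Longrightarrow> 0 \<le> W * z i - w i * s" "\<And>i. d \<le> i \<Longrightarrow> z i = 0"
      using z unfolding dilate_points_def s_def zvec_def by auto
    have "(\<Sum>i<d. w i * s) \<le> (\<Sum>i<d. W * z i)" using z'(2) by (intro sum_mono) auto
    moreover have "(\<Sum>i<d. w i * s) = (W - 1) * s" by (simp add: sum_weights flip: sum_distrib_right)
    moreover have "(\<Sum>i<d. W * z i) = W * s" unfolding s_def by (simp add: sum_distrib_left)
    ultimately have "(W - 1) * s \<le> W * s" by simp
    then have s0: "s = 0" using z'(1) by (simp add: algebra_simps)
    have "0 \<le> z i" if "i < d" for i
      using z'(2)[OF that] s0 W_ge_1 by (simp add: zero_le_mult_iff)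
    then have "\<forall>i\<in>{..<d}. z i = 0" using sum_nonneg_eq_0_iff[of "{..<d}" z] s0 unfolding s_def by auto
    then show "z \<in> {\<lambda>_. 0}" using z'(3) by auto (metis leI lessThan_iff)
  qed
  show "{\<lambda>_. 0} \<subseteq> dilate_points 0" unfolding dilate_points_def zvec_def by simp
qed

lemma lattice_count_eq_card_dilate_points:
  assumes t: "0 < t"
  shows "lattice_count d vertices t = card (dilate_points t)"
proof -
  have scaled: "of_zvec z \<in> (\<lambda>x i. real t * x i) ` lconv vertices \<longleftrightarrow> (\<lambda>i. z i / real t) \<in> lconv vertices"
    for z
  proof -
    have eq: "of_zvec z = (\<lambda>i. real t * x i) \<longleftrightarrow> x = (\<lambda>i. z i / real t)" for x
      using t unfolding of_zvec_def by (auto simp: fun_eq_iff field_simps)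
    show ?thesis unfolding image_iff eq by simp
  qed
  have "(\<lambda>i. z i / real t) \<in> lconv vertices \<longleftrightarrow> z \<in> dilate_points t" if z: "z \<in> zvec d" for z
  proof -
    define s where "s = (\<Sum>i<d. z i)"
    have "(\<Sum>i<d. real_of_int (z i) / real t) = s / real t"
      unfolding s_def by (simp add: sum_divide_distrib)
    moreover have "s / real t \<le> 1 \<longleftrightarrow> s \<le> int t"
      using t by (simp add: field_simps) linarith
    moreover have "0 \<le> real_of_int W * (z i / real t) + w i * (1 - s / real t) \<longleftrightarrow>
        0 \<le> W * z i + w i * (int t - s)" for i
    proof -
      have eq: "real_of_int W * (z i / real t) + w i * (1 - s / real t) =
          real_of_int (W * z i + w i * (int t - s)) / real t"
        using t by (simp add: field_simps)
      have pos_div: "0 \<le> x / real t \<longleftrightarrow> 0 \<le> x" for x :: real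
        using t by (simp add: zero_le_divide_iff)
      show ?thesis unfolding eq pos_div of_int_0_le_iff by (rule refl)
    qed
    ultimately show ?thesis
      using z unfolding lconv_vertices_iff dilate_points_def s_def zvec_def by auto
  qed
  then have "{z \<in> zvec d. of_zvec z \<in> (\<lambda>x i. real t * x i) ` lconv vertices} = dilate_points t"
    unfolding scaled dilate_points_def by auto
  then show ?thesis unfolding lattice_count_def by simp
qed

text \<open>A lattice point \<open>z\<close> of \<open>t P\<close> has scaled barycentric coordinates
  \<open>k = t - \<Sum>z\<close> (apex) and \<open>W z\<^sub>i + w\<^sub>i k\<close>; with \<open>k = q W + r\<close>, the point \<open>(z, t)\<close> of the
  cone is the \<open>r\<close>-th parallelepiped point plus the integer combination with coefficients
  \<open>z\<^sub>i + \<lfloor>k w\<^sub>i / W\<rfloor>\<close> and \<open>q\<close>. The sum of these coefficients is \<open>t - height r\<close>.\<close>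

definition cone_decomp :: "nat \<Rightarrow> (nat \<Rightarrow> int) \<Rightarrow> nat \<times> (nat \<Rightarrow> nat)" where
  "cone_decomp t z = (let k = int t - (\<Sum>i<d. z i) in
     (nat (k mod W), \<lambda>i. if i < d then nat (z i + (k * w i) div W)
                        else if i = d then nat (k div W) else 0))"

definition cone_recomp :: "nat \<times> (nat \<Rightarrow> nat) \<Rightarrow> nat \<Rightarrow> int" where
  "cone_recomp p = (\<lambda>i. if i < d
     then int (snd p i) - ((int (snd p d) * W + int (fst p)) * w i) div W else 0)"

definition cone_decomps :: "nat \<Rightarrow> (nat \<times> (nat \<Rightarrow> nat)) set" where
  "cone_decomps t = (SIGMA r:{..<nat W}.
     if height (int r) \<le> int t then weak_compositions (Suc d) (nat (int t - height (int r))) else {})"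

lemma cone_decomp_mem:
  assumes z: "z \<in> dilate_points t"
  shows "cone_decomp t z \<in> cone_decomps t" and "cone_recomp (cone_decomp t z) = z"
proof -
  define k where "k = int t - (\<Sum>i<d. z i)"
  define r where "r = k mod W"
  define q where "q = k div W"
  have W_pos: "0 < W" using W_ge_1 by simp
  have k: "0 \<le> k" using z unfolding dilate_points_def k_def by auto
  have kqr: "k = q * W + r" unfolding q_def r_def by (rule div_mult_mod_eq[symmetric])
  have r: "0 \<le> r" "r < W" unfolding r_def using W_pos by auto
  have q: "0 \<le> q" unfolding q_def using k W_pos by (simp add: pos_imp_zdiv_nonneg_iff)
  have coeff: "0 \<le> z i + (k * w i) div W" if "i < d" for i
    using z that nonneg_mult_add_iff_div[OF W_pos, of "z i" "k * w i"]
    unfolding dilate_points_def k_def by (simp add: mult.commute)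
  define y where "y = (\<lambda>i. if i < d then nat (z i + (k * w i) div W) else if i = d then nat q else 0)"
  have decomp: "cone_decomp t z = (nat r, y)"
    unfolding cone_decomp_def Let_def y_def k_def r_def q_def by simp
  have "int (\<Sum>i<Suc d. y i) = (\<Sum>i<d. z i) + floor_sum k + q"
    using coeff q by (simp add: y_def floor_sum_def sum.distrib)
  also have "floor_sum k = q * (W - 1) + floor_sum r"
    unfolding kqr by (rule floor_sum_mult_add)
  also have "(\<Sum>i<d. z i) + (q * (W - 1) + floor_sum r) + q = int t - height r"
    unfolding height_def using kqr k_def by (simp add: algebra_simps)
  finally have sum_y: "int (\<Sum>i<Suc d. y i) = int t - height r" .
  then have "(\<Sum>i<Suc d. y i) = nat (int t - height r)"
    by (simp only: sum_y[symmetric] nat_int)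
  moreover have "height r \<le> int t"
    using sum_y of_nat_0_le_iff[of "\<Sum>i<Suc d. y i"] by linarith
  moreover have "\<forall>i\<ge>Suc d. y i = 0" by (simp add: y_def)
  ultimately have "y \<in> weak_compositions (Suc d) (nat (int t - height r))" "height r \<le> int t"
    unfolding weak_compositions_def by simp_all
  then show "cone_decomp t z \<in> cone_decomps t"
    unfolding decomp cone_decomps_def using r by simp
  have "int (nat q) * W + int (nat r) = k" using q r kqr by simp
  then show "cone_recomp (cone_decomp t z) = z"
    using z coeff unfolding decomp cone_recomp_def dilate_points_def zvec_def
    by (auto simp: y_def fun_eq_iff)
qed

lemma cone_recomp_mem:
  assumes p: "p \<in> cone_decomps t"
  shows "cone_recomp p \<in> dilate_points t" and "cone_decomp t (cone_recomp p) = p"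
proof -
  obtain r y where p_eq: "p = (r, y)" by (cases p)
  have r: "r < nat W" and h: "height (int r) \<le> int t"
    and y: "y \<in> weak_compositions (Suc d) (nat (int t - height (int r)))"
    using p unfolding cone_decomps_def p_eq by (auto split: if_splits)
  have W_pos: "0 < W" using W_ge_1 by simp
  define k where "k = int (y d) * W + int r"
  define z where "z = cone_recomp p"
  have z_i: "z i = (if i < d then int (y i) - (k * w i) div W else 0)" for i
    unfolding z_def cone_recomp_def p_eq k_def by simp
  have "(\<Sum>i<Suc d. y i) = nat (int t - height (int r))"
    using y unfolding weak_compositions_def by simp
  then have "(\<Sum>i<d. int (y i)) + int (y d) = int t - height (int r)"
    using h by (simp flip: of_nat_sum)
  moreover have "(\<Sum>i<d. z i) = (\<Sum>i<d. int (y i)) - floor_sum k"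
    unfolding z_i floor_sum_def by (simp add: sum_subtractf)
  moreover have "floor_sum k = int (y d) * (W - 1) + floor_sum (int r)"
    unfolding k_def by (rule floor_sum_mult_add)
  ultimately have tk: "int t - (\<Sum>i<d. z i) = k"
    unfolding height_def k_def by (simp add: algebra_simps)
  have "0 \<le> W * z i + w i * (int t - (\<Sum>i<d. z i))" if "i < d" for i
    using that z_i nonneg_mult_add_iff_div[OF W_pos, of "z i" "k * w i"]
    unfolding tk by (simp add: mult.commute)
  moreover have "0 \<le> k" unfolding k_def using W_pos by simp
  ultimately show "cone_recomp p \<in> dilate_points t"
    unfolding z_def[symmetric] dilate_points_def zvec_def using tk z_i by auto
  have "k mod W = int r" "k div W = int (y d)" unfolding k_def using r by auto
  then have "cone_decomp t z = p"
    using y unfolding cone_decomp_def Let_def tk p_eq weak_compositions_def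
    by (auto simp: z_i fun_eq_iff)
  then show "cone_decomp t (cone_recomp p) = p" unfolding z_def .
qed

lemma card_dilate_points:
  "card (dilate_points t) = (\<Sum>r<nat W. if height (int r) \<le> int t
     then card (weak_compositions (Suc d) (nat (int t - height (int r)))) else 0)"
proof -
  have "bij_betw (cone_decomp t) (dilate_points t) (cone_decomps t)"
    by (rule bij_betw_byWitness[where f' = cone_recomp]) (use cone_decomp_mem cone_recomp_mem in auto)
  then have "card (dilate_points t) = card (cone_decomps t)" by (rule bij_betw_same_card)
  also have "\<dots> = (\<Sum>r<nat W. card (if height (int r) \<le> int t
      then weak_compositions (Suc d) (nat (int t - height (int r))) else {}))"
    unfolding cone_decomps_def by (rule card_SigmaI) (auto simp: finite_weak_compositions)
  finally show ?thesis by (simp add: if_distrib cong: if_cong)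
qed

lemma ehrhart_series_vertices:
  "ehrhart_series d vertices =
     (\<Sum>r<nat W. fps_X ^ nat (height (int r))) * weak_compositions_fps (Suc d)"
proof (rule fps_ext)
  fix t
  have "fps_nth (ehrhart_series d vertices) t = int (card (dilate_points t))"
    unfolding ehrhart_series_def using lattice_count_eq_card_dilate_points dilate_points_0 by simp
  also have "\<dots> = (\<Sum>r<nat W. fps_nth (fps_X ^ nat (height (int r)) * weak_compositions_fps (Suc d)) t)"
    unfolding card_dilate_points of_nat_sum
    by (intro sum.cong refl) (auto simp: fps_X_power_mult_nth weak_compositions_fps_def
        nat_diff_distrib' le_nat_iff height_nonneg)
  finally show "fps_nth (ehrhart_series d vertices) t =
      fps_nth ((\<Sum>r<nat W. fps_X ^ nat (height (int r))) * weak_compositions_fps (Suc d)) t"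
    by (simp add: sum_distrib_right fps_sum_nth)
qed

lemma hstar_vertices: "hstar d vertices k = int (card {r \<in> {..<nat W}. height (int r) = int k})"
proof -
  have "(1 - fps_X) ^ (d + 1) * ehrhart_series d vertices =
      (\<Sum>r<nat W. fps_X ^ nat (height (int r))) * ((1 - fps_X) ^ Suc d * weak_compositions_fps (Suc d))"
    unfolding ehrhart_series_vertices by (simp add: algebra_simps)
  then have "hstar d vertices k = (\<Sum>r<nat W. if k = nat (height (int r)) then 1 else 0)"
    unfolding hstar_def one_minus_X_power_mult_weak_compositions_fps by (simp add: fps_sum_nth)
  also have "\<dots> = int (card {r \<in> {..<nat W}. k = nat (height (int r))})"
    by (simp add: sum.If_cases Int_def)
  also have "{r \<in> {..<nat W}. k = nat (height (int r))} = {r \<in> {..<nat W}. height (int r) = int k}"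
    using height_nonneg by force
  finally show ?thesis .
qed

end

section \<open>Weights from the greedy Egyptian fraction of \<open>1/3\<close>\<close>

fun egypt :: "nat \<Rightarrow> nat" where
  "egypt 0 = 3"
| "egypt (Suc k) = egypt k * (egypt k + 1)"

lemma egypt_ge_3: "3 \<le> egypt k"
  by (induction k) (simp_all add: trans_le_add1)

lemma three_dvd_egypt: "3 dvd egypt k"
  by (induction k) simp_all

lemma Suc_egypt_dvd_egypt: "j < k \<Longrightarrow> egypt j + 1 dvd egypt k"
proof (induction k)
  case (Suc k)
  then have "egypt j + 1 dvd egypt k + 1 \<or> egypt j + 1 dvd egypt k" by (cases "j = k") simp_all
  then show ?case by (auto simp only: egypt.simps intro: dvd_mult dvd_mult2)
qed simp

lemma egypt_div_3: "egypt k div 3 = (\<Sum>j<k. egypt k div (egypt j + 1)) + 1"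
proof (induction k)
  case (Suc k)
  have step: "egypt (Suc k) div (egypt j + 1) = egypt k div (egypt j + 1) * (egypt k + 1)"
    if "j < k" for j
    using dvd_div_mult[OF Suc_egypt_dvd_egypt[OF that], of "egypt k + 1"] by simp
  have last: "egypt (Suc k) div (egypt k + 1) = egypt k"
    by (simp only: egypt.simps) (rule nonzero_mult_div_cancel_right, simp)
  have "(\<Sum>j<Suc k. egypt (Suc k) div (egypt j + 1)) =
      (\<Sum>j<k. egypt k div (egypt j + 1)) * (egypt k + 1) + egypt k"
    unfolding sum.lessThan_Suc last sum_distrib_right using step by simp
  moreover have "egypt (Suc k) div 3 = egypt k div 3 * (egypt k + 1)"
    using dvd_div_mult[OF three_dvd_egypt[of k], of "egypt k + 1"] by simp
  ultimately show ?case unfolding Suc by (simp add: algebra_simps del: egypt.simps)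
qed simp

lemma sum_inverse_Suc_egypt: "(\<Sum>j<k. 1 / real (egypt j + 1)) = 1 / 3 - 1 / real (egypt k)"
proof -
  have M: "real (egypt k) > 0" using egypt_ge_3[of k] by simp
  have "real (egypt k) / 3 = (\<Sum>j<k. real (egypt k) / real (egypt j + 1)) + 1"
    using arg_cong[OF egypt_div_3[of k], of real] three_dvd_egypt[of k] Suc_egypt_dvd_egypt
    by (simp add: real_of_nat_div)
  then show ?thesis using M by (simp add: field_simps sum_distrib_left flip: sum_divide_distrib)
qed

lemma three_power_le_egypt: "3 ^ 2 ^ k \<le> egypt k"
proof (induction k)
  case (Suc k)
  have "(3::nat) ^ 2 ^ Suc k = 3 ^ 2 ^ k * 3 ^ 2 ^ k" by (simp only: power_Suc mult_2 power_add)
  also have "\<dots> \<le> egypt k * (egypt k + 1)" using Suc by (intro mult_le_mono) auto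
  finally show ?case by simp
qed simp

lemma sum_lessThan_add: "(\<Sum>i<a + b. f i) = (\<Sum>i<a. f i) + (\<Sum>i<b. f (a + i))"
  for f :: "nat \<Rightarrow> 'a::comm_monoid_add"
  by (induction b) (simp_all add: algebra_simps)

lemma sum_lessThan_double_div_2: "(\<Sum>i<2 * k. f (i div 2)) = 2 * (\<Sum>j<k. f j)"
  for f :: "nat \<Rightarrow> 'a::comm_semiring_1"
proof (induction k)
  case (Suc k)
  have "2 * Suc k = Suc (Suc (2 * k))" by simp
  then have "(\<Sum>i<2 * Suc k. f (i div 2)) = (\<Sum>i<2 * k. f (i div 2)) + f k + f k"
    by simp
  then show ?case using Suc by (simp add: distrib_left mult_2 add_ac)
qed simp

text \<open>Each weight \<open>W / (egypt j + 1)\<close> with \<open>j < k\<close> occurs twice so that the height grows by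
  exactly 2 from one period of length \<open>egypt k\<close> to the next; the \<open>2K - 1\<close> unit weights do
  not affect heights below \<open>W\<close> and only enlarge the dimension and the number of periods.\<close>

definition egypt_weights :: "nat \<Rightarrow> nat \<Rightarrow> nat \<Rightarrow> int" where
  "egypt_weights k K i =
     (if i < 2 * k then int (K * (egypt k div (egypt (i div 2) + 1)))
      else if i = 2 * k then int (K * (egypt k div 3))
      else if i < 2 * k + 2 * K then 1 else 0)"

lemma sum_egypt_weights:
  assumes K: "1 \<le> K"
  shows "1 + (\<Sum>i<2 * k + 2 * K. egypt_weights k K i) = int (K * egypt k)"
proof -
  obtain K' where K': "K = Suc K'" using K by (cases K) auto
  have "(\<Sum>i<2 * k. egypt_weights k K i) = (\<Sum>i<2 * k. int (K * (egypt k div (egypt (i div 2) + 1))))"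
    by (intro sum.cong) (simp_all add: egypt_weights_def)
  also have "\<dots> = 2 * (\<Sum>j<k. int (K * (egypt k div (egypt j + 1))))"
    by (rule sum_lessThan_double_div_2)
  also have "(\<Sum>j<k. int (K * (egypt k div (egypt j + 1)))) = int K * (int (egypt k div 3) - 1)"
  proof -
    have "(\<Sum>j<k. K * (egypt k div (egypt j + 1))) = K * (egypt k div 3 - 1)"
      using egypt_div_3[of k] by (simp flip: sum_distrib_left)
    then have "int (\<Sum>j<k. K * (egypt k div (egypt j + 1))) = int (K * (egypt k div 3 - 1))"
      by (rule arg_cong)
    then show ?thesis using egypt_ge_3[of k] by simp
  qed
  finally have first: "(\<Sum>i<2 * k. egypt_weights k K i) = 2 * (int K * (int (egypt k div 3) - 1))" .
  have "2 * K = Suc (Suc (2 * K'))" using K' by simp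
  then have "(\<Sum>i<2 * K. egypt_weights k K (2 * k + i)) =
      egypt_weights k K (2 * k) + (\<Sum>i<Suc (2 * K'). egypt_weights k K (2 * k + Suc i))"
    by (simp only: sum.lessThan_Suc_shift add_0_right)
  also have "\<dots> = int K * int (egypt k div 3) + (2 * int K - 1)"
    by (simp add: egypt_weights_def K' algebra_simps)
  finally have "1 + (\<Sum>i<2 * k + 2 * K. egypt_weights k K i) = 3 * int K * int (egypt k div 3)"
    unfolding sum_lessThan_add first by (simp add: algebra_simps)
  then show ?thesis using three_dvd_egypt[of k] by auto
qed

lemma weighted_simplex_egypt_weights:
  assumes K: "1 \<le> K"
  shows "weighted_simplex (2 * k + 2 * K) (egypt_weights k K)"
proof
  have dvd_egypt: "egypt k div s dvd egypt k" if "s dvd egypt k" for s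
    using that by (metis dvd_mult_div_cancel dvd_triv_right)
  have pos: "0 < egypt k div (egypt j + 1)" if "j < k" for j
    using dvd_imp_le[OF Suc_egypt_dvd_egypt[OF that]] egypt_ge_3[of k]
    by (simp add: div_greater_zero_iff)
  have divides: "egypt_weights k K i dvd int (K * egypt k)" if "i < 2 * k + 2 * K" for i
    using that dvd_egypt[OF three_dvd_egypt] dvd_egypt[OF Suc_egypt_dvd_egypt[of "i div 2" k]]
    by (auto simp: egypt_weights_def of_nat_dvd_iff intro: mult_dvd_mono)
  fix i
  show "i < 2 * k + 2 * K \<Longrightarrow> 1 \<le> egypt_weights k K i"
    using pos[of "i div 2"] K egypt_ge_3[of k]
    by (auto simp: egypt_weights_def Suc_le_eq simp flip: of_nat_mult)
  show "2 * k + 2 * K \<le> i \<Longrightarrow> egypt_weights k K i = 0"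
    by (simp add: egypt_weights_def)
  show "i < 2 * k + 2 * K \<Longrightarrow> egypt_weights k K i dvd 1 + (\<Sum>j<2 * k + 2 * K. egypt_weights k K j)"
    unfolding sum_egypt_weights[OF K] using divides by simp
qed

text \<open>For the weights \<open>egypt_weights k K\<close> this is the height on \<open>[0, W)\<close>, independently of \<open>K\<close>.\<close>

definition base_height :: "nat \<Rightarrow> int \<Rightarrow> int" where
  "base_height k v = v - v div 3 - 2 * (\<Sum>j<k. v div int (egypt j + 1))"

lemma base_height_mult_add: "base_height k (u * int (egypt k) + v) = 2 * u + base_height k v"
proof -
  have div: "(u * int (egypt k) + v) div int s = u * int (egypt k div s) + v div int s"
    if dvd: "s dvd egypt k" for s
  proof -
    obtain c where c: "egypt k = s * c" using dvd by (elim dvdE)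
    then have "0 < s" using egypt_ge_3[of k] by (cases s) auto
    then have "(v + u * int c * int s) div int s = v div int s + u * int c" by simp
    moreover have "egypt k div s = c" using c \<open>0 < s\<close> by simp
    ultimately show ?thesis unfolding c by (simp add: algebra_simps)
  qed
  have "(\<Sum>j<k. (u * int (egypt k) + v) div int (egypt j + 1)) =
      u * (int (egypt k div 3) - 1) + (\<Sum>j<k. v div int (egypt j + 1))"
    using div[OF Suc_egypt_dvd_egypt] arg_cong[OF egypt_div_3[of k], of int]
    by (simp add: sum.distrib sum_distrib_left)
  moreover have "int (egypt k) = 3 * int (egypt k div 3)"
    using three_dvd_egypt[of k] by auto
  ultimately show ?thesis
    unfolding base_height_def using div[OF three_dvd_egypt] by (simp add: algebra_simps)
qed

lemma base_height_mod_2: "base_height k v mod 2 = v mod 3 mod 2"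
proof -
  define x where "x = v div 3 - (\<Sum>j<k. v div int (egypt j + 1))"
  have "base_height k v = 2 * x + v mod 3"
    unfolding base_height_def x_def by (simp add: algebra_simps)
  then show ?thesis by (simp only: mod_mult_self4)
qed

lemma base_height_bounds:
  assumes "0 \<le> v" "v < int (egypt k)"
  shows "0 \<le> base_height k v" and "base_height k v \<le> 2 * int k + 2"
proof -
  have M: "real (egypt k) > 0" using egypt_ge_3[of k] by simp
  \<comment> \<open>Without the floors, \<open>base_height k v\<close> would be \<open>2 v / egypt k \<in> [0, 2)\<close>.\<close>
  have "(\<Sum>j<k. v / real (egypt j + 1)) = v * (1 / 3 - 1 / real (egypt k))"
    unfolding sum_inverse_Suc_egypt[symmetric] sum_distrib_left by simp
  then have exact: "v - v / 3 - 2 * (\<Sum>j<k. v / real (egypt j + 1)) = 2 * v / real (egypt k)"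
    using M by (simp add: field_simps)
  have real_base_height: "real_of_int (base_height k v) =
      v - real_of_int (v div 3) - 2 * (\<Sum>j<k. real_of_int (v div int (egypt j + 1)))"
    unfolding base_height_def by simp
  have "(\<Sum>j<k. real_of_int (v div int (egypt j + 1))) \<le> (\<Sum>j<k. v / real (egypt j + 1))"
    by (intro sum_mono) (use real_of_int_div4[of v "int (egypt _ + 1)"] in simp)
  moreover have "real_of_int (v div 3) \<le> v / 3" using real_of_int_div4[of v 3] by simp
  ultimately have "2 * v / real (egypt k) \<le> base_height k v"
    unfolding real_base_height exact[symmetric] by linarith
  moreover have "0 \<le> 2 * v / real (egypt k)" using assms by simp
  ultimately have "0 \<le> real_of_int (base_height k v)" by linarith
  then show "0 \<le> base_height k v" by simp
  have "v / real (egypt j + 1) - real_of_int (v div int (egypt j + 1)) \<le> 1" for j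
    using real_of_int_div3[of v "int (egypt j + 1)"] by simp
  then have "(\<Sum>j<k. v / real (egypt j + 1) - 1) \<le> (\<Sum>j<k. real_of_int (v div int (egypt j + 1)))"
    by (intro sum_mono) (simp add: algebra_simps)
  moreover have "v / 3 - 1 \<le> real_of_int (v div 3)" using real_of_int_div3[of v 3] by simp
  ultimately have "base_height k v \<le> 2 * v / real (egypt k) + 1 + 2 * k"
    unfolding real_base_height exact[symmetric] sum_subtractf by simp
  moreover have "2 * v / real (egypt k) < 2" using assms M by (simp add: field_simps)
  ultimately show "base_height k v \<le> 2 * int k + 2" by linarith
qed

section \<open>Alternating \<open>h\<^sup>*\<close>-vectors\<close>

lemma card_periodic_level_set:
  fixes f :: "nat \<Rightarrow> int" and j K M :: nat
  assumes f: "\<And>v. v < M \<Longrightarrow> 0 \<le> f v \<and> f v \<le> int j" and j: "j < 2 * K"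
  shows "card {r. r < K * M \<and> 2 * int (r div M) + f (r mod M) = int j} =
    card {v. v < M \<and> even (int j - f v)}"
proof -
  let ?A = "{v. v < M \<and> even (int j - f v)}"
  let ?B = "{r. r < K * M \<and> 2 * int (r div M) + f (r mod M) = int j}"
  define g where "g v = nat ((int j - f v) div 2) * M + v" for v
  have "bij_betw g ?A ?B"
  proof (rule bij_betw_byWitness[where f' = "\<lambda>r. r mod M"])
    show "\<forall>v\<in>?A. g v mod M = v" unfolding g_def by simp
    show "\<forall>r\<in>?B. g (r mod M) = r"
    proof
      fix r assume "r \<in> ?B"
      then have "int j - f (r mod M) = 2 * int (r div M)" by simp
      then show "g (r mod M) = r" unfolding g_def by simp
    qed
    show "(\<lambda>r. r mod M) ` ?B \<subseteq> ?A"
    proof clarify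
      fix r assume r: "r < K * M" "2 * int (r div M) + f (r mod M) = int j"
      then have "0 < M" by (cases M) auto
      moreover have "int j - f (r mod M) = 2 * int (r div M)" using r(2) by simp
      ultimately show "r mod M < M \<and> even (int j - f (r mod M))" by simp
    qed
    show "g ` ?A \<subseteq> ?B"
    proof clarify
      fix v assume v: "v < M" "even (int j - f v)"
      define u where "u = (int j - f v) div 2"
      have u: "2 * u = int j - f v" unfolding u_def using v(2) by simp
      then have "0 \<le> u" "u < int K" using f[OF v(1)] j by linarith+
      have "g v < (nat u + 1) * M" using v(1) unfolding g_def u_def[symmetric] by simp
      also have "\<dots> \<le> K * M"
        using \<open>0 \<le> u\<close> \<open>u < int K\<close> by (intro mult_le_mono1) (simp add: nat_less_iff)
      moreover have "g v div M = nat u" and "g v mod M = v"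
        using v(1) unfolding g_def u_def[symmetric] by simp_all
      ultimately show "g v < K * M \<and> 2 * int (g v div M) + f (g v mod M) = int j"
        using u \<open>0 \<le> u\<close> by simp
    qed
  qed
  then show ?thesis by (simp add: bij_betw_same_card)
qed

lemma card_less_3_mult:
  "card {v. v < 3 * N \<and> P (v mod 3)} = N * card {\<rho>. \<rho> < 3 \<and> P \<rho>}"
proof -
  have "bij_betw (\<lambda>v. (v div 3, v mod 3)) {v. v < 3 * N \<and> P (v mod 3)}
      ({..<N} \<times> {\<rho>. \<rho> < 3 \<and> P \<rho>})"
    by (rule bij_betw_byWitness[where f' = "\<lambda>(a, \<rho>). 3 * a + \<rho>"]) auto
  then show ?thesis by (simp add: bij_betw_same_card card_cartesian_product)
qed

lemma mult_div_mult_dvd: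
  fixes r :: int
  assumes "s dvd N" and "0 < N" and "0 < K"
  shows "(r * int (K * (N div s))) div int (K * N) = r div int s"
proof -
  obtain c where c: "N = s * c" using assms(1) by (elim dvdE)
  then have "0 < c" "0 < s" using assms(2) by auto
  then have "(r * int (K * (N div s))) div int (K * N) = (r * int (K * c)) div (int s * int (K * c))"
    unfolding c by (simp add: algebra_simps)
  also have "\<dots> = r div int s" using \<open>0 < c\<close> assms(3) by simp
  finally show ?thesis .
qed

locale egypt_simplex =
  fixes k K :: nat
  assumes K_ge_1: "1 \<le> K"

sublocale egypt_simplex \<subseteq> weighted_simplex "2 * k + 2 * K" "egypt_weights k K"
  by (rule weighted_simplex_egypt_weights[OF K_ge_1])

context egypt_simplex
begin

lemma W_eq: "W = int (K * egypt k)"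
  unfolding W_def using sum_egypt_weights[OF K_ge_1] by simp

lemma height_eq_base_height:
  assumes r: "0 \<le> r" "r < W"
  shows "height r = base_height k r"
proof -
  have M: "0 < egypt k" "0 < K" using egypt_ge_3[of k] K_ge_1 by auto
  have "(\<Sum>i<2 * k. (r * egypt_weights k K i) div W) = (\<Sum>i<2 * k. r div int (egypt (i div 2) + 1))"
  proof (intro sum.cong refl)
    fix i assume "i \<in> {..<2 * k}"
    then have "i < 2 * k" "i div 2 < k" by auto
    then show "(r * egypt_weights k K i) div W = r div int (egypt (i div 2) + 1)"
      unfolding W_eq egypt_weights_def
      using mult_div_mult_dvd[OF Suc_egypt_dvd_egypt[OF \<open>i div 2 < k\<close>] M, of r] by simp
  qed
  also have "\<dots> = 2 * (\<Sum>j<k. r div int (egypt j + 1))"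
    by (rule sum_lessThan_double_div_2)
  finally have units:
    "(\<Sum>i<2 * k. (r * egypt_weights k K i) div W) = 2 * (\<Sum>j<k. r div int (egypt j + 1))" .
  have "(\<Sum>i<2 * K. (r * egypt_weights k K (2 * k + i)) div W) =
      (\<Sum>i<2 * K. if i = 0 then r div 3 else 0)"
    using r mult_div_mult_dvd[OF three_dvd_egypt M, of r]
    by (intro sum.cong refl) (auto simp: egypt_weights_def W_eq simp del: of_nat_mult)
  also have "\<dots> = r div 3" using K_ge_1 by simp
  finally show ?thesis
    unfolding height_def floor_sum_def base_height_def sum_lessThan_add units by simp
qed

lemma height_eq_period_base_height:
  assumes "r < K * egypt k"
  shows "height (int r) = 2 * int (r div egypt k) + base_height k (int (r mod egypt k))"
proof -
  have "height (int r) = base_height k (int r)"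
    using assms by (intro height_eq_base_height) (simp_all add: W_eq flip: of_nat_mult)
  also have "base_height k (int r) = 2 * int (r div egypt k) + base_height k (int (r mod egypt k))"
  proof -
    have "int r = int (r div egypt k) * int (egypt k) + int (r mod egypt k)"
      by (simp flip: of_nat_mult of_nat_add)
    then show ?thesis by (simp only: base_height_mult_add)
  qed
  finally show ?thesis .
qed

lemma card_height_eq:
  assumes "2 * k + 2 \<le> j" and "j < 2 * K"
  shows "card {r \<in> {..<nat W}. height (int r) = int j} =
    card {v. v < egypt k \<and> v mod 3 mod 2 = j mod 2}"
proof -
  let ?f = "\<lambda>v. base_height k (int v)"
  have "nat W = K * egypt k" by (simp only: W_eq nat_int)
  then have "{r \<in> {..<nat W}. height (int r) = int j} =
      {r. r < K * egypt k \<and> 2 * int (r div egypt k) + ?f (r mod egypt k) = int j}"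
    using height_eq_period_base_height by auto
  also have "card \<dots> = card {v. v < egypt k \<and> even (int j - ?f v)}"
  proof (rule card_periodic_level_set)
    fix v assume "v < egypt k"
    then show "0 \<le> ?f v \<and> ?f v \<le> int j" using base_height_bounds[of "int v" k] assms(1) by simp
  qed (rule assms(2))
  also have "{v. v < egypt k \<and> even (int j - ?f v)} = {v. v < egypt k \<and> v mod 3 mod 2 = j mod 2}"
  proof -
    have "even (int j - ?f v) \<longleftrightarrow> ?f v mod 2 = int j mod 2" for v
      by presburger
    also have "?f v mod 2 = int j mod 2 \<longleftrightarrow> int (v mod 3 mod 2) = int (j mod 2)" for v
      unfolding base_height_mod_2 by (simp add: zmod_int)
    finally show ?thesis by simp
  qed
  finally show ?thesis .
qed

lemma hstar_eq:
  assumes "2 * k + 2 \<le> j" and "j < 2 * K"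
  shows "hstar (2 * k + 2 * K) vertices j = (if even j then 2 else 1) * int (egypt k div 3)"
proof -
  have M: "egypt k = 3 * (egypt k div 3)" using three_dvd_egypt[of k] by simp
  have "hstar (2 * k + 2 * K) vertices j =
      int (card {v. v < 3 * (egypt k div 3) \<and> v mod 3 mod 2 = j mod 2})"
    unfolding hstar_vertices card_height_eq[OF assms] by (subst M) simp
  also have "\<dots> = int (egypt k div 3) * int (card {\<rho>::nat. \<rho> < 3 \<and> \<rho> mod 2 = j mod 2})"
    using card_less_3_mult[of "egypt k div 3" "\<lambda>\<rho>. \<rho> mod 2 = j mod 2"] by simp
  also have "card {\<rho>::nat. \<rho> < 3 \<and> \<rho> mod 2 = j mod 2} = (if even j then 2 else 1)"
  proof (cases "even j")
    case True
    then have "{\<rho>::nat. \<rho> < 3 \<and> \<rho> mod 2 = j mod 2} = {0, 2}" by auto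
    then show ?thesis using True by simp
  next
    case False
    then have "{\<rho>::nat. \<rho> < 3 \<and> \<rho> mod 2 = j mod 2} = {1}"
      by (force simp: numeral_3_eq_3 less_Suc_eq odd_iff_mod_2_eq_one)
    then show ?thesis using False by simp
  qed
  finally show ?thesis by simp
qed

lemma hstar_gaps:
  assumes "1 \<le> l" and "k + l + 2 \<le> K"
  shows "hstar (2 * k + 2 * K) vertices (2 * k + 2 * l) -
      hstar (2 * k + 2 * K) vertices (2 * k + 2 * l + 1) = int (egypt k div 3)"
    and "hstar (2 * k + 2 * K) vertices (2 * k + 2 * (l + 1)) -
      hstar (2 * k + 2 * K) vertices (2 * k + 2 * l + 1) = int (egypt k div 3)"
  using assms hstar_eq[of "2 * k + 2 * l"] hstar_eq[of "2 * k + 2 * (l + 1)"]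
    hstar_eq[of "2 * k + 2 * l + 1"]
  by simp_all

end

section \<open>Size of the parameters\<close>

lemma le_three_power_if_ln_le:
  assumes "1 \<le> n" and "ln (real n) \<le> real x"
  shows "n \<le> 3 ^ x"
proof -
  have "real n = exp (ln (real n))" using assms(1) by simp
  also have "\<dots> \<le> exp 1 ^ x" using assms(2) by (simp flip: exp_of_nat_mult)
  also have "\<dots> \<le> 3 ^ x" by (intro power_mono) (use exp_le in auto)
  finally have "real n \<le> real (3 ^ x)" by simp
  then show ?thesis by (simp only: of_nat_le_iff)
qed

lemma ln_ln_pos_imp_ge_3:
  assumes "0 < ln (ln (real n))"
  shows "3 \<le> n"
proof (rule ccontr)
  assume "\<not> 3 \<le> n"
  then have "n = 0 \<or> n = 1 \<or> n = 2" by auto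
  moreover have "ln (ln (2::real)) \<le> 0" using ln_le_minus_one[of 2] by simp
  ultimately show False using assms by auto
qed

lemma ln_ln_ge_if_pos:
  assumes "0 < ln (ln (real n))"
  shows "8 / 100 \<le> ln (ln (real n))"
proof -
  have ln_ge: "1 - 1 / x \<le> ln x" if "0 < x" for x :: real
    using ln_le_minus_one[of "1 / x"] that by (simp add: ln_div)
  have "ln 3 - 1 \<ge> 1 - exp 1 / (3::real)"
    using ln_ge[of "3 / exp 1"] by (simp add: ln_div)
  then have ln3: "109 / 100 \<le> ln (3::real)" using e_less_272 by simp
  moreover have "1 / ln (3::real) \<le> 100 / 109" using ln3 by (simp add: field_simps)
  ultimately have "8 / 100 \<le> ln (ln (3::real))"
    using ln_ge[of "ln 3"] by simp
  also have "\<dots> \<le> ln (ln (real n))"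
    using ln_ln_pos_imp_ge_3[OF assms] ln3 by simp
  finally show ?thesis .
qed

text \<open>The least \<open>k\<close> with \<open>2\<^sup>k \<ge> 1 + ln n\<close>; since \<open>egypt k \<ge> 3\<^bsup>2\<^sup>k\<^esup>\<close>,
  it suffices for \<open>egypt k / 3 \<ge> n\<close>.\<close>

definition egypt_index :: "nat \<Rightarrow> nat" where
  "egypt_index n = nat \<lceil>log 2 (1 + ln (real n))\<rceil>"

lemma le_egypt_egypt_index:
  assumes "1 \<le> n"
  shows "n \<le> egypt (egypt_index n) div 3"
proof -
  define y where "y = log 2 (1 + ln (real n))"
  have ln_nonneg: "0 \<le> ln (real n)" using assms by simp
  then have "0 \<le> y" unfolding y_def by simp
  then have k: "real (egypt_index n) = real_of_int \<lceil>y\<rceil>"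
    unfolding egypt_index_def y_def[symmetric] by simp
  have "1 + ln (real n) = 2 powr y" unfolding y_def using ln_nonneg by simp
  also have "\<dots> \<le> 2 powr real (egypt_index n)" unfolding k by simp
  also have "\<dots> = real (2 ^ egypt_index n)" by (simp add: powr_realpow)
  finally have "ln (real n) \<le> real (2 ^ egypt_index n - 1)"
    by simp
  then have "3 * n \<le> 3 * 3 ^ (2 ^ egypt_index n - 1)"
    using le_three_power_if_ln_le assms by simp
  also have "\<dots> = 3 ^ 2 ^ egypt_index n"
    by (simp flip: power_Suc)
  also have "\<dots> \<le> egypt (egypt_index n)" by (rule three_power_le_egypt)
  finally show ?thesis by simp
qed

lemma egypt_index_le:
  assumes L: "0 < ln (ln (real n))"
  shows "real (egypt_index n) \<le> 2 + 2 * ln (ln (real n))"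
proof -
  have "ln 3 \<le> ln (real n)" using ln_ln_pos_imp_ge_3[OF L] by simp
  then have ln1: "1 \<le> ln (real n)" using ln3_gt_1 by linarith
  define y where "y = log 2 (1 + ln (real n))"
  have "0 \<le> y" unfolding y_def using ln1 by simp
  then have "real (egypt_index n) = real_of_int \<lceil>y\<rceil>"
    unfolding egypt_index_def y_def[symmetric] by simp
  also have "\<dots> < y + 1" using ceiling_correct[of y] by linarith
  finally have "real (egypt_index n) < y + 1" .
  moreover have "y \<le> log 2 (2 * ln (real n))" unfolding y_def using ln1 by simp
  moreover have "log 2 (2 * ln (real n)) = 1 + log 2 (ln (real n))" using ln1 by (simp add: log_mult)
  moreover have "log 2 (ln (real n)) \<le> 2 * ln (ln (real n))"
  proof -
    have "1 / 2 \<le> ln (2::real)" using ln_le_minus_one[of "1 / 2"] by (simp add: ln_div)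
    then have "ln (ln (real n)) / ln 2 \<le> ln (ln (real n)) / (1 / 2)"
      using L by (intro divide_left_mono) auto
    then show ?thesis unfolding log_def by simp
  qed
  ultimately show ?thesis by linarith
qed

lemma dimension_le_ln_ln:
  assumes "0 < m" and "0 < ln (ln (real n))"
  shows "real (2 * egypt_index n + 2 * (egypt_index n + m + 2)) \<le> 200 * real m * ln (ln (real n))"
proof -
  define L where "L = ln (ln (real n))"
  have L: "8 / 100 \<le> L" unfolding L_def using ln_ln_ge_if_pos[OF assms(2)] .
  have "real (egypt_index n) \<le> 2 + 2 * L" unfolding L_def using egypt_index_le[OF assms(2)] .
  moreover have "1 * (200 * L - 2) \<le> real m * (200 * L - 2)"
    by (rule mult_right_mono) (use assms(1) L in auto)
  ultimately show ?thesis unfolding L_def[symmetric] using L by (simp add: algebra_simps)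
qed

theorem theorem1p6:
  shows "\<exists>C::real. C > 0 \<and>
    (\<forall>m n :: nat. m > 0 \<longrightarrow> n > 0 \<longrightarrow>
      (\<exists>(d::nat) (V::(nat \<Rightarrow> int) set) (i::nat \<Rightarrow> nat) (j::nat \<Rightarrow> nat).
          reflexive_polytope d V \<and>
          (\<forall>l\<in>{1..m}. i l < j l \<and> j l < i (l + 1)) \<and>
          i (m + 1) \<le> d \<and>
          (\<forall>l\<in>{1..m}. hstar d V (i l) - hstar d V (j l) \<ge> int n \<and>
                       hstar d V (i (l + 1)) - hstar d V (j l) \<ge> int n) \<and>
          (ln (ln (real n)) > 0 \<longrightarrow> real d \<le> C * real m * ln (ln (real n)))))"
proof (intro exI[of _ "200::real"] conjI allI impI)
  fix m n :: nat
  assume m: "0 < m" and n: "0 < n"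
  define k where "k = egypt_index n"
  define d where "d = 2 * k + 2 * (k + m + 2)"
  interpret P: egypt_simplex k "k + m + 2" by unfold_locales simp
  have "int n \<le> int (egypt k div 3)" using le_egypt_egypt_index n unfolding k_def by simp
  then have "\<forall>l\<in>{1..m}.
      int n \<le> hstar d P.vertices (2 * k + 2 * l) - hstar d P.vertices (2 * k + 2 * l + 1) \<and>
      int n \<le> hstar d P.vertices (2 * k + 2 * (l + 1)) - hstar d P.vertices (2 * k + 2 * l + 1)"
    unfolding d_def using P.hstar_gaps by simp
  moreover have "ln (ln (real n)) > 0 \<longrightarrow> real d \<le> 200 * real m * ln (ln (real n))"
    using dimension_le_ln_ln[OF m] unfolding d_def k_def by blast
  ultimately show "\<exists>d V i j. reflexive_polytope d V \<and>
      (\<forall>l\<in>{1..m}. i l < j l \<and> j l < i (l + 1)) \<and> i (m + 1) \<le> d \<and>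
      (\<forall>l\<in>{1..m}. int n \<le> hstar d V (i l) - hstar d V (j l) \<and>
                   int n \<le> hstar d V (i (l + 1)) - hstar d V (j l)) \<and>
      (0 < ln (ln (real n)) \<longrightarrow> real d \<le> 200 * real m * ln (ln (real n)))"
    using P.reflexive_polytope_vertices
    by (intro exI[of _ d] exI[of _ P.vertices] exI[of _ "\<lambda>l. 2 * k + 2 * l"]
        exI[of _ "\<lambda>l. 2 * k + 2 * l + 1"]) (auto simp: d_def)
qed simp

end
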